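(* Let $U(a,x)=\sum_{n\ge1}u_{2n}(a)x^n$ with coefficients $u_{2n}(a)$ defined below (for $a\notin i\mathbb{Z}$ this is a solution of $(\delta_x^2+a^2)U=x(1+U)^3+(\delta_xU)^2-U\delta_x^2U$, $\delta_x=x\,d/dx$). Then for $a\in\mathbb{R}$ and $z$ fixed in a neighbourhood of $0$, $$U(a,a^2z)\sim\sum_{k=0}^\infty\frac{A_k(z)}{a^{2k}}\qquad (a\to+\infty)$$ as an asymptotic expansion in powers of $a^{-2}$, where the $A_k(z)$ are defined below.
   Context: Coefficients: $(a^2+1)u_2=1$ and for $n\ge2$: $(a^2+n^2)u_{2n}=3u_{2(n-1)}+3\sum_{j_1+j_2=n-1}u_{2j_1}u_{2j_2}+\sum_{j_1+j_2+j_3=n-1}u_{2j_1}u_{2j_2}u_{2j_3}-\sum_{1\le j_1,\,2j_1<n}(n-2j_1)^2u_{2j_1}u_{2(n-j_1)}$, all indices $j_i\ge1$. The functions $A_k(z)$, holomorphic in $|z|<4/27$: $A_0$ is the unique holomorphic solution near $0$ of $z(1+A_0)^3=A_0$ with $A_0(0)=0$, and $(A_k)_{k\ge0}$ is the unique sequence of functions holomorphic in $|z|<4/27$ such that $\sum_kA_k(z)a^{-2k}$ formally solves $a^2(z(1+A)^3-A)=(1+A)\delta_z^2A-(\delta_zA)^2$, $\delta_z=z\,d/dz$. *)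

theory Defs
  imports "HOL-Analysis.Analysis" "HOL-Computational_Algebra.Formal_Power_Series"
begin

text \<open>Coefficients: uc a n stands for u_{2n}(a) (with u_0 := 0, which is harmless since
  all indices in the recurrence are >= 1).\<close>

fun uc :: "real \<Rightarrow> nat \<Rightarrow> real" where
  "uc a 0 = 0"
| "uc a (Suc 0) = 1 / (a^2 + 1)"
| "uc a (Suc (Suc m)) =
     (3 * uc a (Suc m)
      + 3 * (\<Sum>j\<in>{1..<Suc m}. uc a j * uc a (Suc m - j))
      + (\<Sum>j1\<in>{1..<Suc m}. \<Sum>j2\<in>{1..<Suc m - j1}.
            uc a j1 * uc a j2 * uc a (Suc m - j1 - j2))
      - (\<Sum>j\<in>{j. 1 \<le> j \<and> 2 * j < Suc (Suc m)}.
            (real (Suc (Suc m)) - 2 * real j)^2 * uc a j * uc a (Suc (Suc m) - j)))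
     / (a^2 + (real (Suc (Suc m)))^2)"

definition U :: "real \<Rightarrow> complex \<Rightarrow> complex" where
  "U a x = (\<Sum>n. complex_of_real (uc a n) * x ^ n)"

definition delta :: "(complex \<Rightarrow> complex) \<Rightarrow> complex \<Rightarrow> complex" where
  "delta f z = z * deriv f z"

text \<open>The characterisation of the sequence (A_k): holomorphic in |z| < 4/27, A_0(0) = 0,
  and sum_k A_k eps^k (eps = a^{-2}) formally solves
  a^2 (z(1+A)^3 - A) = (1+A) delta^2 A - (delta A)^2, i.e. after multiplying by eps:
  z(1+A)^3 - A = eps ((1+A) delta^2 A - (delta A)^2) as formal power series in eps.\<close>
definition A_seq :: "(nat \<Rightarrow> complex \<Rightarrow> complex) \<Rightarrow> bool" where
  "A_seq A \<longleftrightarrow>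
     (\<forall>k. A k holomorphic_on ball 0 (4/27)) \<and> A 0 0 = 0 \<and>
     (\<forall>z\<in>ball 0 (4/27).
        (let Af = Abs_fps (\<lambda>k. A k z);
             D1 = Abs_fps (\<lambda>k. delta (A k) z);
             D2 = Abs_fps (\<lambda>k. delta (delta (A k)) z)
         in fps_const z * (1 + Af)^3 - Af = fps_X * ((1 + Af) * D2 - D1^2)))"

end

theory Submission
  imports Defs "HOL-Complex_Analysis.Complex_Analysis" "HOL-Computational_Algebra.Polynomial"
begin

text \<open>After the substitution \<open>x = a\<^sup>2 z\<close> and division by \<open>a\<^sup>2\<close>, the series \<open>V(z) = U(a, a\<^sup>2 z)\<close>
  solves the same equation as the formal series \<open>\<Sum>\<^sub>k A\<^sub>k(z) e\<^sup>k\<close> with \<open>e = a\<^sup>-\<^sup>2\<close>. Coefficients are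
  measured against the weights \<open>B\<^sup>n / (n + 1)\<^sup>2\<close>, for which bounds are submultiplicative up to a
  factor 8. In the coefficient recursion of a solution the stiff term \<open>e n\<^sup>2 f\<^sub>n\<close> has the good sign
  and absorbs the derivative terms of the nonlinearity, so small solutions are bounded and stable
  uniformly in \<open>e \<ge> 0\<close>. The truncation \<open>\<Sum>k<K. A\<^sub>k e\<^sup>k\<close> is small and solves the equation up to
  \<open>O(e\<^sup>K)\<close>, so it differs from \<open>V\<close> by \<open>O(e\<^sup>K)\<close> coefficientwise; summing at \<open>|z| < 1/(2B)\<close> gives
  the expansion.\<close>

unbundle no vec_syntax

section \<open>Weighted coefficient bounds\<close>

definition weight :: "real \<Rightarrow> nat \<Rightarrow> real" where
  "weight B n = B ^ n / (real n + 1) ^ 2"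

lemma weight_pos: "B > 0 \<Longrightarrow> weight B n > 0"
  unfolding weight_def by simp

lemma weight_0 [simp]: "weight B 0 = 1"
  unfolding weight_def by simp

lemma weight_le_Suc: "B > 0 \<Longrightarrow> weight B n \<le> 4 / B * weight B (Suc n)"
proof -
  assume B: "B > 0"
  have "(real n + 2) ^ 2 \<le> 4 * (real n + 1) ^ 2"
    by (simp add: power2_eq_square field_simps)
  then show ?thesis
    using B unfolding weight_def by (simp add: field_simps)
qed

lemma power_le_weight:
  assumes "B \<ge> 32"
  shows "8 ^ n \<le> weight B n"
proof -
  have "(real n + 1) ^ 2 \<le> 4 ^ n"
  proof (induction n)
    case (Suc n)
    have "(real (Suc n) + 1) ^ 2 \<le> 4 * (real n + 1) ^ 2"
      by (simp add: power2_eq_square field_simps)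
    with Suc show ?case by simp
  qed simp
  then have "(real n + 1) ^ 2 * 8 ^ n \<le> 32 ^ n"
    using mult_right_mono[of _ "4 ^ n" "8 ^ n :: real"] by (simp add: power_mult_distrib[symmetric])
  also have "\<dots> \<le> B ^ n"
    using assms by (intro power_mono) auto
  finally show ?thesis
    unfolding weight_def by (simp add: field_simps)
qed

lemma sum_inverse_squares_le: "(\<Sum>j\<le>n. 1 / (real j + 1) ^ 2) \<le> 2"
proof -
  have "(\<Sum>j\<le>n. 1 / (real j + 1) ^ 2) \<le> 2 - 1 / (real n + 1)"
  proof (induction n)
    case (Suc n)
    have "1 / (real n + 2) ^ 2 \<le> 1 / ((real n + 1) * (real n + 2))"
      by (intro divide_left_mono) (auto simp: power2_eq_square)
    also have "\<dots> = 1 / (real n + 1) - 1 / (real n + 2)"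
      by (simp add: field_simps)
    finally show ?case
      using Suc by (simp add: add.commute)
  qed simp
  also have "\<dots> \<le> 2"
    by simp
  finally show ?thesis .
qed

lemma convolution_inverse_squares_le:
  "(\<Sum>j\<le>n. 1 / ((real j + 1) ^ 2 * (real (n - j) + 1) ^ 2)) \<le> 8 / (real n + 1) ^ 2"
proof -
  have pointwise: "1 / ((real j + 1) ^ 2 * (real (n - j) + 1) ^ 2)
      \<le> 2 / (real n + 2) ^ 2 * (1 / (real j + 1) ^ 2 + 1 / (real (n - j) + 1) ^ 2)"
    if "j \<le> n" for j
  proof -
    define x y where "x = real j + 1" and "y = real (n - j) + 1"
    have pos: "x > 0" "y > 0" and sum: "x + y = real n + 2"
      using that by (auto simp: x_def y_def of_nat_diff)
    have "(x + y) ^ 2 \<le> 2 * (x ^ 2 + y ^ 2)"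
      using zero_le_power2[of "x - y"] by (simp add: power2_eq_square algebra_simps)
    then have "1 / (x ^ 2 * y ^ 2) \<le> 2 / (x + y) ^ 2 * (1 / x ^ 2 + 1 / y ^ 2)"
      using pos by (simp add: field_simps)
    then show ?thesis
      unfolding sum by (simp add: x_def y_def)
  qed
  have reflect: "(\<Sum>j\<le>n. 1 / (real (n - j) + 1) ^ 2) = (\<Sum>j\<le>n. 1 / (real j + 1) ^ 2)"
    using sum.atLeastAtMost_rev[of "\<lambda>j. 1 / (real j + 1) ^ 2" 0 n] by (simp add: atLeast0AtMost)
  have "(\<Sum>j\<le>n. 1 / ((real j + 1) ^ 2 * (real (n - j) + 1) ^ 2))
      \<le> (\<Sum>j\<le>n. 2 / (real n + 2) ^ 2 * (1 / (real j + 1) ^ 2 + 1 / (real (n - j) + 1) ^ 2))"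
    by (intro sum_mono pointwise) simp
  also have "\<dots> = 2 / (real n + 2) ^ 2 *
      ((\<Sum>j\<le>n. 1 / (real j + 1) ^ 2) + (\<Sum>j\<le>n. 1 / (real (n - j) + 1) ^ 2))"
    by (simp only: distrib_left sum_distrib_left sum.distrib)
  also have "\<dots> = 2 / (real n + 2) ^ 2 * (2 * (\<Sum>j\<le>n. 1 / (real j + 1) ^ 2))"
    by (simp only: reflect mult_2)
  also have "\<dots> \<le> 2 / (real n + 2) ^ 2 * 4"
    using sum_inverse_squares_le[of n] by (intro mult_left_mono) auto
  also have "\<dots> \<le> 8 / (real n + 1) ^ 2"
    using power_mono[of "real n + 1" "real n + 2" 2] by (simp add: frac_le)
  finally show ?thesis .
qed

lemma weighted_convolution_le:
  fixes f g :: "nat \<Rightarrow> real"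
  assumes B: "B > 0"
    and f: "\<And>j. j \<le> n \<Longrightarrow> 0 \<le> f j \<and> f j \<le> D * weight B j"
    and g: "\<And>j. j \<le> n \<Longrightarrow> 0 \<le> g j \<and> g j \<le> E * weight B j"
  shows "(\<Sum>j\<le>n. f j * g (n - j)) \<le> 8 * D * E * weight B n"
proof -
  have D: "D \<ge> 0" and E: "E \<ge> 0"
    using f[of 0] g[of 0] by auto
  have "(\<Sum>j\<le>n. f j * g (n - j)) \<le> (\<Sum>j\<le>n. D * weight B j * (E * weight B (n - j)))"
    using f g D less_imp_le[OF weight_pos[OF B]] by (intro sum_mono mult_mono) auto
  also have "\<dots> = D * E * B ^ n * (\<Sum>j\<le>n. 1 / ((real j + 1) ^ 2 * (real (n - j) + 1) ^ 2))"
    unfolding sum_distrib_left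
  proof (rule sum.cong[OF refl])
    fix j assume "j \<in> {..n}"
    then have "B ^ j * B ^ (n - j) = B ^ n"
      by (simp add: power_add[symmetric])
    then show "D * weight B j * (E * weight B (n - j))
        = D * E * B ^ n * (1 / ((real j + 1) ^ 2 * (real (n - j) + 1) ^ 2))"
      unfolding weight_def by (simp add: field_simps)
  qed
  also have "\<dots> \<le> D * E * B ^ n * (8 / (real n + 1) ^ 2)"
    using D E B by (intro mult_left_mono convolution_inverse_squares_le) auto
  also have "\<dots> = 8 * D * E * weight B n"
    unfolding weight_def by simp
  finally show ?thesis .
qed

lemma norm_fps_mult_nth_le:
  fixes f g :: "'a::real_normed_div_algebra fps"
  assumes B: "B > 0"
    and f: "\<And>j. j \<le> n \<Longrightarrow> norm (f $ j) \<le> D * weight B j"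
    and g: "\<And>j. j \<le> n \<Longrightarrow> norm (g $ j) \<le> E * weight B j"
  shows "norm ((f * g) $ n) \<le> 8 * D * E * weight B n"
proof -
  have "norm ((f * g) $ n) \<le> (\<Sum>j\<le>n. norm (f $ j) * norm (g $ (n - j)))"
    unfolding fps_mult_nth atLeast0AtMost by (rule order.trans[OF norm_sum]) (simp add: norm_mult)
  also have "\<dots> \<le> 8 * D * E * weight B n"
    using f g by (intro weighted_convolution_le[OF B]) auto
  finally show ?thesis .
qed

lemma norm_one_plus_nth_le:
  fixes f :: "complex fps"
  assumes "B > 0" and "\<And>j. cmod (f $ j) \<le> D * weight B j"
  shows "cmod ((1 + f) $ j) \<le> (1 + D) * weight B j"
  using assms(2)[of j] less_imp_le[OF weight_pos[OF assms(1)], of j]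
  by (cases "j = 0") (auto simp: algebra_simps intro: order.trans[OF norm_triangle_ineq])

lemma fps_nth_le_weight:
  fixes f :: "complex fps"
  assumes "ereal (1/8) < fps_conv_radius f" and "B \<ge> 32"
  shows "\<exists>M\<ge>0. \<forall>n. cmod (f $ n) \<le> M * weight B n"
proof -
  have "summable (\<lambda>n. f $ n * (1/8) ^ n)"
    using assms(1) by (intro summable_fps) simp
  then have "(\<lambda>n. f $ n * (1/8) ^ n) \<longlonglongrightarrow> 0"
    by (rule summable_LIMSEQ_zero)
  then have "Bseq (\<lambda>n. f $ n * (1/8) ^ n)"
    by (intro convergent_imp_Bseq convergentI)
  then obtain M where M: "M > 0" "\<And>n. cmod (f $ n * (1/8) ^ n) \<le> M"
    by (auto simp: Bseq_def)
  have "cmod (f $ n) \<le> M * weight B n" for n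
  proof -
    have "cmod (f $ n) \<le> M * 8 ^ n"
      using M(2)[of n] by (simp add: norm_divide norm_power field_simps)
    also have "\<dots> \<le> M * weight B n"
      using M(1) power_le_weight[OF assms(2)] by (intro mult_left_mono) auto
    finally show ?thesis .
  qed
  then show ?thesis
    using M(1) by (intro exI[of _ M]) auto
qed

lemma weighted_fps_series:
  fixes f :: "complex fps"
  assumes B: "B > 0" and f: "\<And>n. cmod (f $ n) \<le> D * weight B n" and z: "cmod z \<le> 1 / (2 * B)"
  shows "summable (\<lambda>n. f $ n * z ^ n)" and "cmod (\<Sum>n. f $ n * z ^ n) \<le> 2 * D"
proof -
  have D: "D \<ge> 0"
    using f[of 0] norm_ge_zero[of "f $ 0"] by (simp del: norm_ge_zero)
  have term_le: "norm (f $ n * z ^ n) \<le> D * (1 / 2) ^ n" for n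
  proof -
    have "weight B n \<le> B ^ n"
      using B unfolding weight_def by (simp add: divide_le_eq one_le_power mult_le_cancel_left1)
    then have "cmod (f $ n) \<le> D * B ^ n"
      using f[of n] D by (meson mult_left_mono order.trans)
    moreover have "cmod z ^ n \<le> (1 / (2 * B)) ^ n"
      using z by (intro power_mono) auto
    ultimately have "cmod (f $ n) * cmod z ^ n \<le> D * B ^ n * (1 / (2 * B)) ^ n"
      using D B by (intro mult_mono) auto
    also have "\<dots> = D * (1 / 2) ^ n"
      using B by (simp add: power_divide power_mult_distrib)
    finally show ?thesis
      by (simp add: norm_mult norm_power)
  qed
  have geometric: "summable (\<lambda>n. D * (1 / 2 :: real) ^ n)"
    by (intro summable_mult summable_geometric) simp
  show "summable (\<lambda>n. f $ n * z ^ n)"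
    by (rule summable_comparison_test'[OF geometric]) (use term_le in auto)
  have "cmod (\<Sum>n. f $ n * z ^ n) \<le> (\<Sum>n. D * (1 / 2 :: real) ^ n)"
    by (rule norm_suminf_le[OF term_le geometric])
  also have "\<dots> = 2 * D"
    using suminf_mult[of "\<lambda>n. (1 / 2 :: real) ^ n" D] suminf_geometric[of "1 / 2 :: real"] by simp
  finally show "cmod (\<Sum>n. f $ n * z ^ n) \<le> 2 * D" .
qed

section \<open>The Euler operator and the defect of the equation\<close>

lemma fps_XD_nth [simp]: "fps_XD f $ n = of_nat n * (f $ n :: 'a::comm_ring_1)"
  by (simp add: fps_XD_def)

lemma fps_XD_diff [simp]: "fps_XD (f - g) = fps_XD f - fps_XD (g :: 'a::comm_ring_1 fps)"
  by (rule fps_ext) (simp add: algebra_simps)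

lemma fps_XD_0 [simp]: "fps_XD (0 :: 'a::comm_semiring_1 fps) = 0"
  by (simp add: fps_XD_def)

definition fps_bracket :: "'a::comm_ring_1 fps \<Rightarrow> 'a fps \<Rightarrow> 'a fps" where
  "fps_bracket f g = f * fps_XD (fps_XD g) - fps_XD f * fps_XD g"

lemma fps_bracket_nth:
  "fps_bracket f g $ n = (\<Sum>j\<le>n. f $ j * g $ (n - j) * (of_nat (n - j) * (of_nat n - 2 * of_nat j)))"
  unfolding fps_bracket_def fps_sub_nth fps_mult_nth atLeast0AtMost sum_subtractf[symmetric]
  by (intro sum.cong) (auto simp: of_nat_diff algebra_simps)

lemma norm_bracket_weight_le:
  assumes "j \<le> n"
  shows "cmod (of_nat (n - j) * (of_nat n - 2 * of_nat j) :: complex) \<le> real n ^ 2"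
proof -
  have "(of_nat (n - j) * (of_nat n - 2 * of_nat j) :: complex)
      = of_real (real (n - j) * (real n - 2 * real j))"
    by simp
  then have "cmod (of_nat (n - j) * (of_nat n - 2 * of_nat j) :: complex)
      = real (n - j) * \<bar>real n - 2 * real j\<bar>"
    by (simp only: norm_of_real abs_mult)
  also have "\<dots> \<le> real n * real n"
    using assms by (intro mult_mono) auto
  finally show ?thesis
    by (simp add: power2_eq_square)
qed

text \<open>The factor \<open>n - j\<close> kills the term \<open>j = n\<close> and \<open>f $ 0 = 0\<close> kills the term \<open>j = 0\<close>,
  so only coefficients of index below \<open>n\<close> enter.\<close>

lemma norm_fps_bracket_nth_le:
  fixes f g :: "complex fps"
  assumes B: "B > 0" and f0: "f $ 0 = 0"
    and f: "\<And>j. j < n \<Longrightarrow> cmod (f $ j) \<le> D * weight B j"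
    and g: "\<And>j. j < n \<Longrightarrow> cmod (g $ j) \<le> E * weight B j"
  shows "cmod (fps_bracket f g $ n) \<le> real n ^ 2 * (8 * D * E * weight B n)"
proof (cases "n = 0")
  case True
  then show ?thesis by (simp add: fps_bracket_nth f0)
next
  case False
  define f' g' where "f' j = (if j < n then cmod (f $ j) else 0)"
    and "g' j = (if j < n then cmod (g $ j) else 0)" for j
  have DE: "D \<ge> 0" "E \<ge> 0"
    using f[of 0] g[of 0] False norm_ge_zero[of "f $ 0"] norm_ge_zero[of "g $ 0"]
    by (simp_all del: norm_ge_zero)
  have term_le: "cmod (f $ j * g $ (n - j) * (of_nat (n - j) * (of_nat n - 2 * of_nat j)))
      \<le> real n ^ 2 * (f' j * g' (n - j))" if "j \<le> n" for j
  proof (cases "j = 0 \<or> j = n")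
    case True
    then have zero: "f $ j * g $ (n - j) * (of_nat (n - j) * (of_nat n - 2 * of_nat j)) = 0"
      using f0 by auto
    have "0 \<le> f' j * g' (n - j)"
      by (simp add: f'_def g'_def)
    then show ?thesis
      unfolding zero by simp
  next
    case False
    have "cmod (f $ j * g $ (n - j) * (of_nat (n - j) * (of_nat n - 2 * of_nat j)))
        \<le> cmod (f $ j) * cmod (g $ (n - j)) * real n ^ 2"
      unfolding norm_mult[of "f $ j * g $ (n - j)"] norm_mult[of "f $ j"]
      using norm_bracket_weight_le[OF that] by (intro mult_left_mono) auto
    then show ?thesis
      using False that by (simp add: f'_def g'_def mult_ac)
  qed
  have "cmod (fps_bracket f g $ n) \<le> real n ^ 2 * (\<Sum>j\<le>n. f' j * g' (n - j))"
    unfolding fps_bracket_nth sum_distrib_left by (rule order.trans[OF norm_sum sum_mono], rule term_le) simp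
  also have "\<dots> \<le> real n ^ 2 * (8 * D * E * weight B n)"
    using f g DE less_imp_le[OF weight_pos[OF B]]
    by (intro mult_left_mono weighted_convolution_le[OF B]) (auto simp: f'_def g'_def)
  finally show ?thesis .
qed

text \<open>\<open>defect D x e f\<close> is the equation of the statement after the substitution \<open>x \<mapsto> a\<^sup>2 x\<close> and
  division by \<open>a\<^sup>2\<close>, with \<open>D\<close> the Euler operator and \<open>e = a\<^sup>-\<^sup>2\<close>. It is instantiated with \<open>e\<close> a number
  (\<open>fps_defect\<close>), a formal variable (\<open>formal_defect\<close>) and a polynomial variable (\<open>poly_defect\<close>).\<close>

definition defect :: "('a \<Rightarrow> 'a) \<Rightarrow> 'a \<Rightarrow> 'a \<Rightarrow> 'a \<Rightarrow> 'a::comm_ring_1" where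
  "defect D x e f = x * (1 + f) ^ 3 - f - e * ((1 + f) * D (D f) - (D f) ^ 2)"

abbreviation fps_defect :: "complex \<Rightarrow> complex fps \<Rightarrow> complex fps" where
  "fps_defect c \<equiv> defect fps_XD fps_X (fps_const c)"

lemma fps_defect_eq:
  "fps_defect c f = fps_X * (1 + f) ^ 3 - f - fps_const c * (fps_XD (fps_XD f) + fps_bracket f f)"
  unfolding defect_def fps_bracket_def by (simp add: algebra_simps power2_eq_square)

lemma fps_defect_nth_Suc:
  "fps_defect c f $ Suc n
     = ((1 + f) ^ 3) $ n - f $ Suc n * (1 + c * of_nat (Suc n) ^ 2) - c * fps_bracket f f $ Suc n"
  unfolding fps_defect_eq by (simp add: algebra_simps power2_eq_square)

section \<open>A priori bounds and stability\<close>

lemma norm_le_if_damped_eq: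
  fixes w T Q :: complex
  assumes eq: "w * (1 + of_real e * of_nat n ^ 2) = T - of_real e * Q" and e: "e \<ge> 0"
    and T: "cmod T \<le> D" and Q: "cmod Q \<le> real n ^ 2 * D"
  shows "cmod w \<le> D"
proof -
  have "(1 + of_real e * of_nat n ^ 2 :: complex) = of_real (1 + e * real n ^ 2)"
    by simp
  then have "cmod w * (1 + e * real n ^ 2) = cmod (T - of_real e * Q)"
    using e by (simp add: eq[symmetric] norm_mult del: of_real_add of_real_mult)
  also have "\<dots> \<le> cmod T + e * cmod Q"
    using e norm_triangle_ineq4[of T "of_real e * Q"] by (simp add: norm_mult)
  also have "\<dots> \<le> D * (1 + e * real n ^ 2)"
    using T Q e mult_left_mono[OF Q e] by (simp add: algebra_simps)
  finally show ?thesis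
    using e by (simp add: add_pos_nonneg mult_le_cancel_right_pos)
qed

lemma norm_one_plus_cube_nth_le:
  fixes f :: "complex fps"
  assumes f0: "f $ 0 = 0" and B: "B \<ge> 128"
    and f: "\<And>j. j \<le> m \<Longrightarrow> cmod (f $ j) \<le> 4 / B * weight B j"
  shows "cmod (((1 + f) ^ 3) $ m) \<le> 4 / B * weight B (Suc m)"
proof (cases "m = 0")
  case True
  then show ?thesis
    using B by (simp add: fps_power_zeroth f0 weight_def)
next
  case False
  define D where "D = 4 / B"
  define h where "h = 3 + 3 * f + f * f"
  have BD: "B > 0" "D \<ge> 0" "D \<le> 1 / 32"
    using B by (auto simp: D_def)
  have w: "\<And>j. 0 \<le> weight B j"
    using less_imp_le[OF weight_pos[OF BD(1)]] .
  have "(1 + f) ^ 3 = 1 + f * h"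
    by (simp add: h_def algebra_simps power3_eq_cube)
  then have cube: "((1 + f) ^ 3) $ m = (f * h) $ m"
    using False by simp
  have h_le: "cmod (h $ j) \<le> 4 * weight B j" if "j \<le> m" for j
  proof -
    have ff: "cmod ((f * f) $ j) \<le> 8 * D * D * weight B j"
      using f that by (intro norm_fps_mult_nth_le[OF BD(1)]) (auto simp: D_def)
    define c :: complex where "c = (if j = 0 then 3 else 0)"
    have "h $ j = c + 3 * f $ j + (f * f) $ j"
      by (simp add: h_def c_def fps_numeral_nth)
    then have "cmod (h $ j) \<le> cmod c + 3 * cmod (f $ j) + cmod ((f * f) $ j)"
      using norm_triangle_ineq[of "c + 3 * f $ j" "(f * f) $ j"] norm_triangle_ineq[of c "3 * f $ j"]
      by (simp add: norm_mult)
    also have "\<dots> \<le> 3 * weight B j + 3 * (D * weight B j) + 8 * D * D * weight B j"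
      using f[OF that] ff w[of j] by (intro add_mono) (auto simp: D_def c_def)
    also have "\<dots> = (3 + 3 * D + 8 * D * D) * weight B j"
      by (simp add: algebra_simps)
    also have "\<dots> \<le> 4 * weight B j"
      using BD w[of j] mult_mono[of D "1/32" D "1/32"] by (intro mult_right_mono) auto
    finally show ?thesis .
  qed
  have "cmod (((1 + f) ^ 3) $ m) \<le> 8 * D * 4 * weight B m"
    unfolding cube using f h_le by (intro norm_fps_mult_nth_le[OF BD(1)]) (auto simp: D_def)
  also have "\<dots> \<le> 8 * D * 4 * (4 / B * weight B (Suc m))"
    using BD weight_le_Suc[OF BD(1)] by (intro mult_left_mono) auto
  also have "\<dots> \<le> D * weight B (Suc m)"
    using BD B mult_right_mono[OF B w[of "Suc m"]] by (simp add: D_def field_simps)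
  finally show ?thesis
    unfolding D_def .
qed

lemma fps_defect_solution_nth_le:
  fixes f :: "complex fps"
  assumes sol: "fps_defect (of_real e) f = 0" and f0: "f $ 0 = 0" and e: "e \<ge> 0" and B: "B \<ge> 128"
  shows "cmod (f $ n) \<le> 4 / B * weight B n"
proof (induction n rule: less_induct)
  case (less n)
  show ?case
  proof (cases n)
    case 0
    then show ?thesis using f0 B by simp
  next
    case (Suc m)
    have IH: "\<And>j. j < Suc m \<Longrightarrow> cmod (f $ j) \<le> 4 / B * weight B j"
      using less Suc by blast
    have eq: "f $ Suc m * (1 + of_real e * of_nat (Suc m) ^ 2)
        = ((1 + f) ^ 3) $ m - of_real e * fps_bracket f f $ Suc m"
      using arg_cong[OF sol, of "\<lambda>g. g $ Suc m"] unfolding fps_defect_nth_Suc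
      by (simp add: eq_diff_eq diff_eq_eq add.commute)
    have "cmod (fps_bracket f f $ Suc m) \<le> real (Suc m) ^ 2 * (8 * (4 / B) * (4 / B) * weight B (Suc m))"
      using B IH by (intro norm_fps_bracket_nth_le[OF _ f0]) auto
    also have "\<dots> \<le> real (Suc m) ^ 2 * (4 / B * weight B (Suc m))"
      using B less_imp_le[OF weight_pos, of B "Suc m"] mult_right_mono[of 32 B "weight B (Suc m)"]
      by (intro mult_left_mono) (auto simp: field_simps)
    finally show ?thesis
      unfolding Suc using B IH by (intro norm_le_if_damped_eq[OF eq e] norm_one_plus_cube_nth_le[OF f0]) auto
  qed
qed

lemma fps_defect_diff_nth_Suc:
  fixes v s :: "complex fps"
  shows "(v - s) $ Suc m * (1 + c * of_nat (Suc m) ^ 2)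
    = ((v - s) * ((1 + v) ^ 2 + (1 + v) * (1 + s) + (1 + s) ^ 2)) $ m
      + (fps_defect c s - fps_defect c v) $ Suc m
      - c * (fps_bracket (v - s) v $ Suc m + fps_bracket s (v - s) $ Suc m)"
proof -
  have "fps_defect c s - fps_defect c v
    = (v - s) - fps_X * ((v - s) * ((1 + v) ^ 2 + (1 + v) * (1 + s) + (1 + s) ^ 2))
      + fps_const c * (fps_XD (fps_XD (v - s)) + fps_bracket (v - s) v + fps_bracket s (v - s))"
    unfolding fps_defect_eq fps_bracket_def by (simp add: algebra_simps power2_eq_square power3_eq_cube)
  from arg_cong[OF this, of "\<lambda>g. g $ Suc m"] show ?thesis
    by (simp add: algebra_simps power2_eq_square)
qed

lemma norm_cube_difference_factor_nth_le:
  fixes v s :: "complex fps"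
  assumes B: "B > 0"
    and v: "\<And>n. cmod (v $ n) \<le> 1 / 16 * weight B n" and s: "\<And>n. cmod (s $ n) \<le> 1 / 16 * weight B n"
  shows "cmod (((1 + v) ^ 2 + (1 + v) * (1 + s) + (1 + s) ^ 2) $ j) \<le> 96 * weight B j"
proof -
  have one_plus: "cmod ((1 + v) $ j) \<le> 2 * weight B j" "cmod ((1 + s) $ j) \<le> 2 * weight B j" for j
    using norm_one_plus_nth_le[OF B v, of j] norm_one_plus_nth_le[OF B s, of j] less_imp_le[OF weight_pos[OF B], of j]
    by (auto intro: order.trans[OF _ mult_right_mono[of _ 2]])
  have "cmod (((1 + v) ^ 2 + (1 + v) * (1 + s) + (1 + s) ^ 2) $ j)
      \<le> cmod (((1 + v) ^ 2) $ j) + cmod (((1 + v) * (1 + s)) $ j) + cmod (((1 + s) ^ 2) $ j)"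
    unfolding fps_add_nth by (rule order.trans[OF norm_triangle_ineq add_right_mono[OF norm_triangle_ineq]])
  also have "\<dots> \<le> 8 * 2 * 2 * weight B j + 8 * 2 * 2 * weight B j + 8 * 2 * 2 * weight B j"
    unfolding power2_eq_square using one_plus by (intro add_mono norm_fps_mult_nth_le[OF B]) auto
  finally show ?thesis
    by simp
qed

lemma fps_defect_stability:
  fixes v s R :: "complex fps"
  assumes v: "fps_defect (of_real e) v = 0" and s: "fps_defect (of_real e) s = R"
    and v0: "v $ 0 = 0" and s0: "s $ 0 = 0" and e: "e \<ge> 0" and B: "B \<ge> 8192"
    and v_le: "\<And>n. cmod (v $ n) \<le> 1 / 16 * weight B n"
    and s_le: "\<And>n. cmod (s $ n) \<le> 1 / 16 * weight B n"
    and R_le: "\<And>n. cmod (R $ n) \<le> Dr * weight B n"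
  shows "cmod ((v - s) $ n) \<le> 2 * Dr * weight B n"
proof (induction n rule: less_induct)
  case (less n)
  define w where "w = v - s"
  define G where "G = (1 + v) ^ 2 + (1 + v) * (1 + s) + (1 + s) ^ 2"
  have Bp: "B > 0"
    using B by simp
  have Dr: "Dr \<ge> 0"
    using R_le[of 0] norm_ge_zero[of "R $ 0"] by (simp del: norm_ge_zero)
  show ?case
  proof (cases n)
    case 0
    then show ?thesis using v0 s0 Dr by simp
  next
    case (Suc m)
    have IH: "\<And>j. j < Suc m \<Longrightarrow> cmod (w $ j) \<le> 2 * Dr * weight B j"
      using less Suc by (simp add: w_def)
    have eq: "w $ Suc m * (1 + of_real e * of_nat (Suc m) ^ 2)
        = ((w * G) $ m + R $ Suc m) - of_real e * (fps_bracket w v $ Suc m + fps_bracket s w $ Suc m)"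
      using fps_defect_diff_nth_Suc[of v s m "of_real e"] v s by (simp add: w_def G_def)
    have "cmod ((w * G) $ m) \<le> 8 * (2 * Dr) * 96 * weight B m"
      using IH norm_cube_difference_factor_nth_le[OF Bp v_le s_le]
      by (intro norm_fps_mult_nth_le[OF Bp]) (auto simp: G_def)
    also have "\<dots> \<le> 8 * (2 * Dr) * 96 * (4 / B * weight B (Suc m))"
      using Dr by (intro mult_left_mono weight_le_Suc[OF Bp]) auto
    also have "\<dots> \<le> Dr * weight B (Suc m)"
      using B Dr less_imp_le[OF weight_pos[OF Bp]] mult_right_mono[of 6144 B "Dr * weight B (Suc m)"]
      by (simp add: field_simps)
    finally have T: "cmod ((w * G) $ m + R $ Suc m) \<le> 2 * Dr * weight B (Suc m)"
      using R_le[of "Suc m"] norm_triangle_ineq[of "(w * G) $ m" "R $ Suc m"] by simp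
    have w0: "w $ 0 = 0"
      using v0 s0 by (simp add: w_def)
    have "cmod (fps_bracket w v $ Suc m) \<le> real (Suc m) ^ 2 * (8 * (2 * Dr) * (1 / 16) * weight B (Suc m))"
      using IH v_le by (intro norm_fps_bracket_nth_le[OF Bp w0]) auto
    moreover have "cmod (fps_bracket s w $ Suc m) \<le> real (Suc m) ^ 2 * (8 * (1 / 16) * (2 * Dr) * weight B (Suc m))"
      using IH s_le by (intro norm_fps_bracket_nth_le[OF Bp s0]) auto
    ultimately have Q: "cmod (fps_bracket w v $ Suc m + fps_bracket s w $ Suc m)
        \<le> real (Suc m) ^ 2 * (2 * Dr * weight B (Suc m))"
      using norm_triangle_ineq[of "fps_bracket w v $ Suc m" "fps_bracket s w $ Suc m"]
      by (simp add: algebra_simps)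
    show ?thesis
      using norm_le_if_damped_eq[OF eq e T Q] unfolding Suc w_def .
  qed
qed

section \<open>The rescaled series U\<close>

definition fps_scale :: "'a::comm_semiring_1 \<Rightarrow> 'a fps \<Rightarrow> 'a fps" where
  "fps_scale c f = Abs_fps (\<lambda>n. c ^ n * f $ n)"

lemma fps_scale_nth [simp]: "fps_scale c f $ n = c ^ n * f $ n"
  by (simp add: fps_scale_def)

lemma fps_scale_add [simp]: "fps_scale c (f + g) = fps_scale c f + fps_scale c g"
  by (rule fps_ext) (simp add: algebra_simps)

lemma fps_scale_diff [simp]:
  "fps_scale c (f - g) = fps_scale c f - fps_scale (c :: 'a::comm_ring_1) g"
  by (rule fps_ext) (simp add: algebra_simps)

lemma fps_scale_0 [simp]: "fps_scale c 0 = 0"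
  by (rule fps_ext) simp

lemma fps_scale_1 [simp]: "fps_scale c 1 = 1"
  by (rule fps_ext) simp

lemma fps_scale_const [simp]: "fps_scale c (fps_const k) = fps_const k"
  by (rule fps_ext) simp

lemma fps_scale_fps_X [simp]: "fps_scale c fps_X = fps_const c * fps_X"
  by (rule fps_ext) (simp add: fps_X_def)

lemma fps_scale_mult [simp]: "fps_scale c (f * g) = fps_scale c f * fps_scale c g"
proof (rule fps_ext)
  fix n
  have "c ^ n * (f $ i * g $ (n - i)) = c ^ i * f $ i * (c ^ (n - i) * g $ (n - i))" if "i \<le> n" for i
    using that by (simp add: mult_ac flip: power_add)
  then show "fps_scale c (f * g) $ n = (fps_scale c f * fps_scale c g) $ n"
    by (simp add: fps_mult_nth sum_distrib_left)
qed

lemma fps_scale_power [simp]: "fps_scale c (f ^ n) = fps_scale c f ^ n"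
  by (induction n) simp_all

lemma fps_scale_XD [simp]: "fps_scale c (fps_XD f) = fps_XD (fps_scale (c :: 'a::comm_ring_1) f)"
  by (rule fps_ext) (simp add: mult_ac)

lemma fps_scale_bracket [simp]:
  "fps_scale c (fps_bracket f g) = fps_bracket (fps_scale (c :: 'a::comm_ring_1) f) (fps_scale c g)"
  by (simp add: fps_bracket_def)

lemma fps_defect_fps_scale:
  fixes c :: complex
  assumes "c \<noteq> 0"
  shows "fps_defect (1 / c) (fps_scale c u) = fps_const (1 / c) *
    fps_scale c (fps_X * (1 + u) ^ 3 - fps_const c * u - fps_XD (fps_XD u) - fps_bracket u u)"
proof -
  have "fps_const (1 / c) * fps_const c = 1"
    using assms by (simp flip: fps_const_mult)
  then show ?thesis
    unfolding fps_defect_eq by (simp add: algebra_simps) (simp flip: mult.assoc)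
qed

definition fps_U :: "real \<Rightarrow> complex fps" where
  "fps_U a = Abs_fps (\<lambda>n. complex_of_real (uc a n))"

lemma fps_U_nth_0 [simp]: "fps_U a $ 0 = 0"
  by (simp add: fps_U_def)

lemma fps_of_real_mult_nth:
  "(Abs_fps (\<lambda>n. complex_of_real (f n)) * Abs_fps (\<lambda>n. complex_of_real (g n))) $ k
     = complex_of_real (\<Sum>i\<le>k. f i * g (k - i))"
  by (simp add: fps_mult_nth atLeast0AtMost)

lemma sum_convolution_drop_ends:
  fixes h :: "nat \<Rightarrow> real"
  assumes "h 0 = 0" "g 0 = 0"
  shows "(\<Sum>i\<le>k. h i * g (k - i)) = (\<Sum>i\<in>{1..<k}. h i * g (k - i))"
  by (rule sum.mono_neutral_right) (use assms in \<open>auto simp: not_less Suc_le_eq\<close>)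

lemma fps_U_square_nth:
  "(fps_U a * fps_U a) $ k = complex_of_real (\<Sum>i\<in>{1..<k}. uc a i * uc a (k - i))"
  unfolding fps_U_def fps_of_real_mult_nth
  using sum_convolution_drop_ends[of "uc a" "uc a" k] by simp

lemma fps_U_cube_nth:
  "(fps_U a * (fps_U a * fps_U a)) $ k = complex_of_real
     (\<Sum>i\<in>{1..<k}. \<Sum>l\<in>{1..<k - i}. uc a i * uc a l * uc a (k - i - l))"
proof -
  have "fps_U a * fps_U a = Abs_fps (\<lambda>k. complex_of_real (\<Sum>i\<le>k. uc a i * uc a (k - i)))"
    unfolding fps_U_def by (rule fps_ext) (simp only: fps_of_real_mult_nth fps_nth_Abs_fps)
  then have "(fps_U a * (fps_U a * fps_U a)) $ k
      = complex_of_real (\<Sum>i\<le>k. uc a i * (\<Sum>l\<le>k - i. uc a l * uc a (k - i - l)))"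
    unfolding fps_U_def by (simp only: fps_of_real_mult_nth)
  also have "(\<Sum>i\<le>k. uc a i * (\<Sum>l\<le>k - i. uc a l * uc a (k - i - l)))
      = (\<Sum>i\<in>{1..<k}. uc a i * (\<Sum>l\<in>{1..<k - i}. uc a l * uc a (k - i - l)))"
  proof -
    define G where "G j = (\<Sum>l\<in>{1..<j}. uc a l * uc a (j - l))" for j
    have "(\<Sum>l\<le>j. uc a l * uc a (j - l)) = G j" for j
      unfolding G_def by (rule sum_convolution_drop_ends) simp_all
    then have "(\<Sum>i\<le>k. uc a i * (\<Sum>l\<le>k - i. uc a l * uc a (k - i - l))) = (\<Sum>i\<le>k. uc a i * G (k - i))"
      by (simp del: diff_diff_left)
    also have "\<dots> = (\<Sum>i\<in>{1..<k}. uc a i * G (k - i))"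
      by (rule sum_convolution_drop_ends) (simp_all add: G_def)
    finally show ?thesis
      by (simp add: G_def)
  qed
  finally show ?thesis
    by (simp add: sum_distrib_left mult.assoc)
qed

lemma fps_U_one_plus_cube_nth:
  "((1 + fps_U a) ^ 3) $ Suc m = complex_of_real (3 * uc a (Suc m)
     + 3 * (\<Sum>j\<in>{1..<Suc m}. uc a j * uc a (Suc m - j))
     + (\<Sum>j1\<in>{1..<Suc m}. \<Sum>j2\<in>{1..<Suc m - j1}. uc a j1 * uc a j2 * uc a (Suc m - j1 - j2)))"
proof -
  have "(1 + fps_U a) ^ 3 = 1 + 3 * fps_U a + 3 * (fps_U a * fps_U a) + fps_U a * (fps_U a * fps_U a)"
    by (simp add: algebra_simps power3_eq_cube)
  then show ?thesis
    by (simp add: fps_U_square_nth fps_U_cube_nth fps_mult_numeral_left) (simp add: fps_U_def)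
qed

lemma sum_bracket_symmetrize:
  fixes h :: "nat \<Rightarrow> real"
  assumes h0: "h 0 = 0"
  shows "(\<Sum>j\<le>n. h j * h (n - j) * (real (n - j) * (real n - 2 * real j)))
    = (\<Sum>j\<in>{j. 1 \<le> j \<and> 2 * j < n}. (real n - 2 * real j) ^ 2 * h j * h (n - j))"
proof -
  define T where "T j = h j * h (n - j) * (real (n - j) * (real n - 2 * real j))" for j
  define L M H where "L = {j. 2 * j < n}" and "M = {j. 2 * j = n}" and "H = {j. j \<le> n \<and> n < 2 * j}"
  have fin: "finite L" "finite M" "finite H"
    unfolding L_def M_def H_def by (auto intro: finite_subset[of _ "{..n}"])
  have "{..n} = L \<union> M \<union> H" "L \<inter> M = {}" "(L \<union> M) \<inter> H = {}"
    unfolding L_def M_def H_def by auto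
  then have "(\<Sum>j\<le>n. T j) = (\<Sum>j\<in>L. T j) + (\<Sum>j\<in>M. T j) + (\<Sum>j\<in>H. T j)"
    using fin by (simp add: sum.union_disjoint)
  also have "(\<Sum>j\<in>M. T j) = 0"
    by (rule sum.neutral) (auto simp: M_def T_def)
  also have "(\<Sum>j\<in>H. T j) = (\<Sum>j\<in>L. T (n - j))"
    by (rule sum.reindex_bij_witness[where i = "\<lambda>j. n - j" and j = "\<lambda>j. n - j"]) (auto simp: L_def H_def)
  also have "(\<Sum>j\<in>L. T j) + 0 + (\<Sum>j\<in>L. T (n - j)) = (\<Sum>j\<in>L. (real n - 2 * real j) ^ 2 * h j * h (n - j))"
    unfolding sum.distrib[symmetric] add_0_right
  proof (rule sum.cong[OF refl])
    fix j assume "j \<in> L"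
    then have "j \<le> n" by (simp add: L_def)
    then show "T j + T (n - j) = (real n - 2 * real j) ^ 2 * h j * h (n - j)"
      unfolding T_def by (simp add: of_nat_diff power2_eq_square algebra_simps)
  qed
  also have "\<dots> = (\<Sum>j\<in>{j. 1 \<le> j \<and> 2 * j < n}. (real n - 2 * real j) ^ 2 * h j * h (n - j))"
    by (rule sum.mono_neutral_right) (use fin h0 in \<open>auto simp: L_def Suc_le_eq intro!: gr0I\<close>)
  finally show ?thesis
    unfolding T_def .
qed

lemma fps_U_bracket_nth:
  "fps_bracket (fps_U a) (fps_U a) $ n
     = complex_of_real (\<Sum>j\<in>{j. 1 \<le> j \<and> 2 * j < n}. (real n - 2 * real j) ^ 2 * uc a j * uc a (n - j))"
proof -
  have "fps_bracket (fps_U a) (fps_U a) $ n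
      = complex_of_real (\<Sum>j\<le>n. uc a j * uc a (n - j) * (real (n - j) * (real n - 2 * real j)))"
    by (simp add: fps_bracket_nth fps_U_def)
  then show ?thesis
    by (simp only: sum_bracket_symmetrize[of "uc a"] uc.simps(1))
qed

text \<open>This is the equation \<open>(\<delta>\<^sup>2 + a\<^sup>2) U = x (1 + U)\<^sup>3 + (\<delta>U)\<^sup>2 - U \<delta>\<^sup>2U\<close> of the statement; the recurrence
  defining \<open>uc\<close> is its coefficientwise form.\<close>

lemma fps_U_ode:
  "fps_X * (1 + fps_U a) ^ 3
     = fps_const (of_real (a ^ 2)) * fps_U a + fps_XD (fps_XD (fps_U a)) + fps_bracket (fps_U a) (fps_U a)"
proof (rule fps_ext)
  fix n
  have pos: "a ^ 2 + real n ^ 2 > 0" if "n > 0" for n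
    using that by (simp add: add_nonneg_pos)
  define u where "u = fps_U a"
  have RHS: "(fps_const (of_real (a ^ 2)) * u + fps_XD (fps_XD u) + fps_bracket u u) $ n
      = complex_of_real ((a ^ 2 + real n ^ 2) * uc a n
          + (\<Sum>j\<in>{j. 1 \<le> j \<and> 2 * j < n}. (real n - 2 * real j) ^ 2 * uc a j * uc a (n - j)))"
    by (simp add: u_def fps_U_bracket_nth algebra_simps power2_eq_square) (simp add: fps_U_def)
  consider "n = 0" | "n = 1" | m where "n = Suc (Suc m)"
    by (metis One_nat_def not0_implies_Suc)
  then show "(fps_X * (1 + u) ^ 3) $ n = (fps_const (of_real (a ^ 2)) * u + fps_XD (fps_XD u) + fps_bracket u u) $ n"
  proof cases
    case 1
    then show ?thesis
      unfolding RHS by simp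
  next
    case 2
    then show ?thesis
      unfolding RHS using pos[of 1] by (simp add: fps_power_zeroth u_def)
  next
    case 3
    define S2 S3 Sq where "S2 = (\<Sum>j\<in>{1..<Suc m}. uc a j * uc a (Suc m - j))"
      and "S3 = (\<Sum>j1\<in>{1..<Suc m}. \<Sum>j2\<in>{1..<Suc m - j1}. uc a j1 * uc a j2 * uc a (Suc m - j1 - j2))"
      and "Sq = (\<Sum>j\<in>{j. 1 \<le> j \<and> 2 * j < n}. (real n - 2 * real j) ^ 2 * uc a j * uc a (n - j))"
    have "uc a n = (3 * uc a (Suc m) + 3 * S2 + S3 - Sq) / (a ^ 2 + real n ^ 2)"
      unfolding S2_def S3_def Sq_def 3 by simp
    then have recurrence: "(a ^ 2 + real n ^ 2) * uc a n + Sq = 3 * uc a (Suc m) + 3 * S2 + S3"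
      using pos[of n] 3 by (simp add: field_simps del: uc.simps)
    have "(fps_X * (1 + u) ^ 3) $ n = complex_of_real (3 * uc a (Suc m) + 3 * S2 + S3)"
      unfolding 3 S2_def S3_def u_def by (simp add: fps_U_one_plus_cube_nth)
    also have "\<dots> = (fps_const (of_real (a ^ 2)) * u + fps_XD (fps_XD u) + fps_bracket u u) $ n"
      unfolding RHS recurrence[symmetric] Sq_def ..
    finally show ?thesis .
  qed
qed

lemma fps_defect_fps_U_scaled:
  assumes "a \<noteq> 0"
  shows "fps_defect (of_real (1 / a ^ 2)) (fps_scale (of_real (a ^ 2)) (fps_U a)) = 0"
proof -
  have "fps_X * (1 + fps_U a) ^ 3 - fps_const (of_real (a ^ 2)) * fps_U a
      - fps_XD (fps_XD (fps_U a)) - fps_bracket (fps_U a) (fps_U a) = 0"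
    by (simp add: fps_U_ode)
  then show ?thesis
    using fps_defect_fps_scale[of "of_real (a ^ 2)" "fps_U a"] assms by simp
qed

lemma U_eq_suminf: "U a (of_real (a ^ 2) * z) = (\<Sum>n. fps_scale (of_real (a ^ 2)) (fps_U a) $ n * z ^ n)"
  unfolding U_def by (simp add: fps_U_def power_mult_distrib mult_ac)

lemma U_summable:
  assumes "a \<noteq> 0" and "B \<ge> 128" and "cmod z \<le> 1 / (2 * B)"
  shows "summable (\<lambda>n. complex_of_real (uc a n) * (complex_of_real (a ^ 2) * z) ^ n)"
proof -
  have bound: "cmod (fps_scale (of_real (a ^ 2)) (fps_U a) $ n) \<le> 4 / B * weight B n" for n
    using assms by (intro fps_defect_solution_nth_le[OF fps_defect_fps_U_scaled]) (auto simp: fps_U_def)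
  have "summable (\<lambda>n. fps_scale (of_real (a ^ 2)) (fps_U a) $ n * z ^ n)"
    using assms by (intro weighted_fps_series(1)[OF _ bound]) auto
  then show ?thesis
    by (simp add: fps_U_def power_mult_distrib mult_ac)
qed

section \<open>The formal solution\<close>

definition fps_map :: "('a \<Rightarrow> 'b) \<Rightarrow> 'a fps \<Rightarrow> 'b fps" where
  "fps_map f P = Abs_fps (\<lambda>k. f (P $ k))"

text \<open>In a series \<open>P :: complex fps fps\<close> the outer variable is \<open>e = a\<^sup>-\<^sup>2\<close> and the inner one is \<open>z\<close>.\<close>

abbreviation formal_defect :: "complex fps fps \<Rightarrow> complex fps fps" where
  "formal_defect \<equiv> defect (fps_map fps_XD) (fps_const fps_X) fps_X"

definition has_fps_expansion_coeffwise :: "(complex \<Rightarrow> complex fps) \<Rightarrow> complex fps fps \<Rightarrow> bool" where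
  "has_fps_expansion_coeffwise \<phi> P \<longleftrightarrow> (\<forall>k. (\<lambda>z. \<phi> z $ k) has_fps_expansion P $ k)"

lemma has_fps_expansion_coeffwise_add:
  "has_fps_expansion_coeffwise \<phi> P \<Longrightarrow> has_fps_expansion_coeffwise \<psi> Q
    \<Longrightarrow> has_fps_expansion_coeffwise (\<lambda>z. \<phi> z + \<psi> z) (P + Q)"
  unfolding has_fps_expansion_coeffwise_def by (auto intro: has_fps_expansion_add)

lemma has_fps_expansion_coeffwise_diff:
  "has_fps_expansion_coeffwise \<phi> P \<Longrightarrow> has_fps_expansion_coeffwise \<psi> Q
    \<Longrightarrow> has_fps_expansion_coeffwise (\<lambda>z. \<phi> z - \<psi> z) (P - Q)"
  unfolding has_fps_expansion_coeffwise_def by (auto intro: has_fps_expansion_diff)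

lemma has_fps_expansion_coeffwise_mult:
  "has_fps_expansion_coeffwise \<phi> P \<Longrightarrow> has_fps_expansion_coeffwise \<psi> Q
    \<Longrightarrow> has_fps_expansion_coeffwise (\<lambda>z. \<phi> z * \<psi> z) (P * Q)"
  unfolding has_fps_expansion_coeffwise_def fps_mult_nth
  by (auto intro!: has_fps_expansion_sum has_fps_expansion_mult)

lemma has_fps_expansion_coeffwise_1: "has_fps_expansion_coeffwise (\<lambda>z. 1) 1"
  unfolding has_fps_expansion_coeffwise_def
proof
  fix k
  show "(\<lambda>z. (1 :: complex fps) $ k) has_fps_expansion (1 :: complex fps fps) $ k"
    by (cases k) (auto simp flip: fps_const_1_eq_1)
qed

lemma has_fps_expansion_coeffwise_power:
  "has_fps_expansion_coeffwise \<phi> P \<Longrightarrow> has_fps_expansion_coeffwise (\<lambda>z. \<phi> z ^ n) (P ^ n)"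
  by (induction n) (auto intro: has_fps_expansion_coeffwise_mult has_fps_expansion_coeffwise_1)

lemma has_fps_expansion_coeffwise_const:
  "has_fps_expansion_coeffwise (\<lambda>z. fps_const z) (fps_const fps_X)"
  unfolding has_fps_expansion_coeffwise_def
proof
  fix k
  show "(\<lambda>z. fps_const z $ k) has_fps_expansion fps_const fps_X $ k"
    by (cases k) (auto intro: has_fps_expansion_fps_X)
qed

lemma has_fps_expansion_coeffwise_fps_X: "has_fps_expansion_coeffwise (\<lambda>z. fps_X) fps_X"
  unfolding has_fps_expansion_coeffwise_def
proof
  fix k
  show "(\<lambda>z. (fps_X :: complex fps) $ k) has_fps_expansion (fps_X :: complex fps fps) $ k"
    by (cases "k = 1") (auto simp: fps_X_def simp flip: fps_const_1_eq_1)
qed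

lemma has_fps_expansion_delta:
  "f has_fps_expansion F \<Longrightarrow> delta f has_fps_expansion fps_XD F"
  unfolding delta_def[abs_def] fps_XD_def comp_def
  by (intro has_fps_expansion_mult has_fps_expansion_fps_X has_fps_expansion_deriv)

lemma A_seq_equation:
  assumes "A_seq A" and "z \<in> ball 0 (4/27)"
  shows "fps_const z * (1 + Abs_fps (\<lambda>k. A k z)) ^ 3 - Abs_fps (\<lambda>k. A k z)
    = fps_X * ((1 + Abs_fps (\<lambda>k. A k z)) * Abs_fps (\<lambda>k. delta (delta (A k)) z)
      - (Abs_fps (\<lambda>k. delta (A k) z)) ^ 2)"
proof -
  have "\<forall>z\<in>ball 0 (4/27). fps_const z * (1 + Abs_fps (\<lambda>k. A k z)) ^ 3 - Abs_fps (\<lambda>k. A k z)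
    = fps_X * ((1 + Abs_fps (\<lambda>k. A k z)) * Abs_fps (\<lambda>k. delta (delta (A k)) z)
      - (Abs_fps (\<lambda>k. delta (A k) z)) ^ 2)"
    using assms(1) unfolding A_seq_def Let_def by (elim conjE)
  then show ?thesis
    using assms(2) by (rule bspec)
qed

lemma A_seq_formal_solution:
  assumes "A_seq A"
  shows "formal_defect (Abs_fps (\<lambda>k. fps_expansion (A k) 0)) = 0"
proof -
  define P where "P = Abs_fps (\<lambda>k. fps_expansion (A k) 0)"
  define Af D1 D2 where "Af z = Abs_fps (\<lambda>k. A k z)"
    and "D1 z = Abs_fps (\<lambda>k. delta (A k) z)" and "D2 z = Abs_fps (\<lambda>k. delta (delta (A k)) z)" for z
  define \<Phi> where "\<Phi> z = fps_const z * (1 + Af z) ^ 3 - Af z - fps_X * ((1 + Af z) * D2 z - (D1 z) ^ 2)" for z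
  have "A k has_fps_expansion fps_expansion (A k) 0" for k
    using assms unfolding A_seq_def by (intro has_fps_expansion_fps_expansion[of "ball 0 (4/27)"]) auto
  then have "has_fps_expansion_coeffwise Af P" "has_fps_expansion_coeffwise D1 (fps_map fps_XD P)"
    "has_fps_expansion_coeffwise D2 (fps_map fps_XD (fps_map fps_XD P))"
    unfolding has_fps_expansion_coeffwise_def Af_def D1_def D2_def P_def fps_map_def
    by (simp_all add: has_fps_expansion_delta)
  then have expansion: "has_fps_expansion_coeffwise \<Phi> (formal_defect P)"
    unfolding \<Phi>_def defect_def
    by (intro has_fps_expansion_coeffwise_diff has_fps_expansion_coeffwise_mult has_fps_expansion_coeffwise_power
        has_fps_expansion_coeffwise_add has_fps_expansion_coeffwise_1 has_fps_expansion_coeffwise_const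
        has_fps_expansion_coeffwise_fps_X)
  have zero: "\<Phi> z = 0" if "z \<in> ball 0 (4/27)" for z
  proof -
    have "fps_const z * (1 + Af z) ^ 3 - Af z = fps_X * ((1 + Af z) * D2 z - (D1 z) ^ 2)"
      using A_seq_equation[OF assms that] unfolding Af_def D1_def D2_def .
    then show ?thesis
      unfolding \<Phi>_def by (simp only: diff_self)
  qed
  have "\<forall>\<^sub>F z in nhds 0. z \<in> ball (0 :: complex) (4/27)"
    by (intro eventually_nhds_in_open) auto
  then have "\<forall>\<^sub>F z in nhds 0. \<Phi> z $ k = 0" for k
    by (rule eventually_mono) (simp add: zero)
  then have "(\<lambda>z. \<Phi> z $ k) has_fps_expansion 0" for k
    using has_fps_expansion_cong[of "\<lambda>z. \<Phi> z $ k" "\<lambda>z. 0" 0 0] by simp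
  then have "formal_defect P $ k = 0" for k
    using fps_expansion_unique_complex expansion[unfolded has_fps_expansion_coeffwise_def, rule_format, of k]
    by metis
  then show ?thesis
    unfolding P_def by (simp add: fps_eq_iff)
qed

lemma A_seq_at_0:
  assumes "A_seq A"
  shows "A k 0 = 0"
proof -
  have delta_0: "Abs_fps (\<lambda>k. delta (F k) 0) = 0" for F :: "nat \<Rightarrow> complex \<Rightarrow> complex"
    by (simp add: delta_def fps_eq_iff)
  have "fps_const 0 * (1 + Abs_fps (\<lambda>k. A k 0)) ^ 3 - Abs_fps (\<lambda>k. A k 0)
      = fps_X * ((1 + Abs_fps (\<lambda>k. A k 0)) * Abs_fps (\<lambda>k. delta (delta (A k)) 0)
        - (Abs_fps (\<lambda>k. delta (A k) 0)) ^ 2)"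
    by (rule A_seq_equation[OF assms]) simp
  then have "Abs_fps (\<lambda>k. A k 0) = 0"
    unfolding delta_0 by simp
  then show ?thesis
    by (simp add: fps_eq_iff)
qed

lemma A_seq_fps_expansion:
  assumes "A_seq A"
  shows "ereal (4/27) \<le> fps_conv_radius (fps_expansion (A k) 0)"
    and "cmod z < 4/27 \<Longrightarrow> (\<lambda>n. fps_expansion (A k) 0 $ n * z ^ n) sums A k z"
    and "fps_expansion (A k) 0 $ 0 = 0"
proof -
  have hol: "A k holomorphic_on ball 0 (4/27)"
    using assms unfolding A_seq_def by blast
  then show rad: "ereal (4/27) \<le> fps_conv_radius (fps_expansion (A k) 0)"
    by (intro conv_radius_fps_expansion) auto
  show "(\<lambda>n. fps_expansion (A k) 0 $ n * z ^ n) sums A k z" if "cmod z < 4/27"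
  proof -
    have "ereal (cmod z) < ereal (4/27)"
      using that by simp
    then have "ereal (cmod z) < fps_conv_radius (fps_expansion (A k) 0)"
      using rad by (rule order.strict_trans2)
    then have "(\<lambda>n. fps_expansion (A k) 0 $ n * z ^ n) sums eval_fps (fps_expansion (A k) 0) z"
      by (rule sums_eval_fps)
    moreover have "eval_fps (fps_expansion (A k) 0) z = A k z"
      using eval_fps_expansion'[of "A k" 0 "ereal (4/27)" z] hol that by simp
    ultimately show ?thesis
      by simp
  qed
  show "fps_expansion (A k) 0 $ 0 = 0"
    using A_seq_at_0[OF assms] by (simp add: fps_expansion_def)
qed

lemma formal_defect_nth_0: "formal_defect P $ 0 = fps_defect 0 (P $ 0)"
  unfolding defect_def by (simp add: fps_power_zeroth)

section \<open>Truncations of the formal solution\<close>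

definition truncation :: "(nat \<Rightarrow> 'a::comm_ring_1 fps) \<Rightarrow> nat \<Rightarrow> 'a fps poly" where
  "truncation F K = (\<Sum>k<K. monom (F k) k)"

lemma coeff_truncation: "coeff (truncation F K) j = (if j < K then F j else 0)"
  by (simp add: truncation_def coeff_sum)

lemma poly_truncation_nth: "poly (truncation F K) (fps_const c) $ n = (\<Sum>k<K. F k $ n * c ^ k)"
  by (simp add: truncation_def poly_sum poly_monom fps_sum_nth)

lemma truncation_sums:
  fixes F :: "nat \<Rightarrow> complex fps"
  assumes "\<And>k. (\<lambda>n. F k $ n * z ^ n) sums A k"
  shows "(\<lambda>n. poly (truncation F K) (fps_const c) $ n * z ^ n) sums (\<Sum>k<K. A k * c ^ k)"
proof -
  have "(\<lambda>n. \<Sum>k<K. F k $ n * z ^ n * c ^ k) sums (\<Sum>k<K. A k * c ^ k)"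
    by (intro sums_sum sums_mult2 assms)
  then show ?thesis
    by (simp add: poly_truncation_nth sum_distrib_left sum_distrib_right mult_ac)
qed

abbreviation poly_defect :: "complex fps poly \<Rightarrow> complex fps poly" where
  "poly_defect \<equiv> defect (map_poly fps_XD) [:fps_X:] [:0, 1:]"

lemma poly_map_poly_fps_XD:
  fixes P :: "'a::comm_ring_1 fps poly"
  shows "poly (map_poly fps_XD P) (fps_const c) = fps_XD (poly P (fps_const c))"
proof (induction P rule: pCons_induct)
  case (pCons a p)
  have "map_poly fps_XD (pCons a p) = pCons (fps_XD a) (map_poly fps_XD p)"
    by (rule map_poly_pCons) simp
  then show ?case
    using pCons by (simp add: algebra_simps)
qed simp

lemma poly_poly_defect: "poly (poly_defect P) (fps_const c) = fps_defect c (poly P (fps_const c))"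
  unfolding defect_def by (simp add: poly_map_poly_fps_XD)

definition agrees_below :: "nat \<Rightarrow> 'a::comm_ring_1 poly \<Rightarrow> 'a fps \<Rightarrow> bool" where
  "agrees_below K P Q \<longleftrightarrow> (\<forall>j<K. coeff P j = Q $ j)"

lemma agrees_below_add: "agrees_below K P Q \<Longrightarrow> agrees_below K P' Q' \<Longrightarrow> agrees_below K (P + P') (Q + Q')"
  unfolding agrees_below_def by simp

lemma agrees_below_diff: "agrees_below K P Q \<Longrightarrow> agrees_below K P' Q' \<Longrightarrow> agrees_below K (P - P') (Q - Q')"
  unfolding agrees_below_def by simp

lemma agrees_below_mult: "agrees_below K P Q \<Longrightarrow> agrees_below K P' Q' \<Longrightarrow> agrees_below K (P * P') (Q * Q')"
  unfolding agrees_below_def coeff_mult fps_mult_nth atLeast0AtMost by (auto intro!: sum.cong)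

lemma agrees_below_1: "agrees_below K 1 1"
  unfolding agrees_below_def by (simp add: coeff_1)

lemma agrees_below_power: "agrees_below K P Q \<Longrightarrow> agrees_below K (P ^ n) (Q ^ n)"
  by (induction n) (auto intro: agrees_below_mult agrees_below_1)

lemma agrees_below_const: "agrees_below K [:c:] (fps_const c)"
  unfolding agrees_below_def by (auto simp: coeff_pCons split: nat.splits)

lemma agrees_below_X: "agrees_below K [:0, 1:] fps_X"
  unfolding agrees_below_def by (auto simp: coeff_pCons fps_X_def split: nat.splits)

lemma agrees_below_map: "agrees_below K P Q \<Longrightarrow> f 0 = 0 \<Longrightarrow> agrees_below K (map_poly f P) (fps_map f Q)"
  unfolding agrees_below_def by (simp add: coeff_map_poly fps_map_def)

lemma agrees_below_defect:
  "agrees_below K P Q \<Longrightarrow> agrees_below K (poly_defect P) (formal_defect Q)"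
  unfolding defect_def
  by (intro agrees_below_diff agrees_below_mult agrees_below_power agrees_below_add agrees_below_1
      agrees_below_const agrees_below_X agrees_below_map) simp_all

lemma fps_conv_radius_fps_XD: "fps_conv_radius f \<le> fps_conv_radius (fps_XD (f :: complex fps))"
proof -
  have "fps_conv_radius f \<le> fps_conv_radius (fps_deriv f)"
    by (rule fps_conv_radius_deriv)
  also have "\<dots> \<le> fps_conv_radius (fps_X * fps_deriv f)"
    using fps_conv_radius_mult[of fps_X "fps_deriv f"] by simp
  finally show ?thesis
    by (simp add: fps_XD_def)
qed

definition coeffs_conv_radius_gt :: "real \<Rightarrow> complex fps poly \<Rightarrow> bool" where
  "coeffs_conv_radius_gt r P \<longleftrightarrow> (\<forall>j. ereal r < fps_conv_radius (coeff P j))"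

lemma coeffs_conv_radius_gt_add:
  "coeffs_conv_radius_gt r P \<Longrightarrow> coeffs_conv_radius_gt r Q \<Longrightarrow> coeffs_conv_radius_gt r (P + Q)"
  unfolding coeffs_conv_radius_gt_def by (auto intro: order.strict_trans2[OF _ fps_conv_radius_add])

lemma coeffs_conv_radius_gt_diff:
  "coeffs_conv_radius_gt r P \<Longrightarrow> coeffs_conv_radius_gt r Q \<Longrightarrow> coeffs_conv_radius_gt r (P - Q)"
  unfolding coeffs_conv_radius_gt_def by (auto intro: order.strict_trans2[OF _ fps_conv_radius_diff])

lemma coeffs_conv_radius_gt_mult:
  assumes "coeffs_conv_radius_gt r P" "coeffs_conv_radius_gt r Q"
  shows "coeffs_conv_radius_gt r (P * Q)"
proof -
  have sum: "ereal r < fps_conv_radius (\<Sum>i\<in>I. f i)" if "\<And>i. ereal r < fps_conv_radius (f i)" for I f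
    using that by (induction I rule: infinite_finite_induct)
      (auto intro: order.strict_trans2[OF _ fps_conv_radius_add])
  show ?thesis
    using assms unfolding coeffs_conv_radius_gt_def coeff_mult
    by (auto intro!: sum order.strict_trans2[OF _ fps_conv_radius_mult])
qed

lemma coeffs_conv_radius_gt_1: "coeffs_conv_radius_gt r 1"
  unfolding coeffs_conv_radius_gt_def by (simp add: coeff_1)

lemma coeffs_conv_radius_gt_power: "coeffs_conv_radius_gt r P \<Longrightarrow> coeffs_conv_radius_gt r (P ^ n)"
  by (induction n) (auto intro: coeffs_conv_radius_gt_mult coeffs_conv_radius_gt_1)

lemma coeffs_conv_radius_gt_const: "ereal r < fps_conv_radius c \<Longrightarrow> coeffs_conv_radius_gt r [:c:]"
  unfolding coeffs_conv_radius_gt_def by (auto simp: coeff_pCons split: nat.splits)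

lemma coeffs_conv_radius_gt_X: "coeffs_conv_radius_gt r [:0, 1:]"
  unfolding coeffs_conv_radius_gt_def by (auto simp: coeff_pCons split: nat.splits)

lemma coeffs_conv_radius_gt_map_poly_XD:
  "coeffs_conv_radius_gt r P \<Longrightarrow> coeffs_conv_radius_gt r (map_poly fps_XD P)"
  unfolding coeffs_conv_radius_gt_def
  by (auto simp: coeff_map_poly intro: order.strict_trans2[OF _ fps_conv_radius_fps_XD])

lemma coeffs_conv_radius_gt_defect:
  "coeffs_conv_radius_gt r P \<Longrightarrow> coeffs_conv_radius_gt r (poly_defect P)"
  unfolding defect_def
  by (intro coeffs_conv_radius_gt_diff coeffs_conv_radius_gt_mult coeffs_conv_radius_gt_power
      coeffs_conv_radius_gt_add coeffs_conv_radius_gt_1 coeffs_conv_radius_gt_const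
      coeffs_conv_radius_gt_X coeffs_conv_radius_gt_map_poly_XD) simp_all

lemma poly_fps_const_nth_le:
  assumes rad: "coeffs_conv_radius_gt (1/8) P" and vanish: "\<And>j. j < K \<Longrightarrow> coeff P j = 0"
    and B: "B \<ge> 32"
  shows "\<exists>M\<ge>0. \<forall>e n. 0 \<le> e \<longrightarrow> e \<le> 1 \<longrightarrow>
           cmod (poly P (fps_const (complex_of_real e)) $ n) \<le> M * e ^ K * weight B n"
proof -
  have "\<forall>i. \<exists>M\<ge>0. \<forall>n. cmod (coeff P i $ n) \<le> M * weight B n"
    using fps_nth_le_weight[OF _ B] rad unfolding coeffs_conv_radius_gt_def by blast
  then obtain Mc where Mc: "\<And>i. Mc i \<ge> 0" "\<And>i n. cmod (coeff P i $ n) \<le> Mc i * weight B n"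
    by metis
  define M where "M = (\<Sum>i\<le>degree P. Mc i)"
  have "cmod (poly P (fps_const (complex_of_real e)) $ n) \<le> M * e ^ K * weight B n"
    if e: "0 \<le> e" "e \<le> 1" for e n
  proof -
    have "cmod (coeff P i $ n * complex_of_real e ^ i) \<le> Mc i * e ^ K * weight B n" for i
    proof (cases "i < K")
      case False
      then have "e ^ i \<le> e ^ K"
        using e by (simp add: power_decreasing)
      then have "cmod (coeff P i $ n) * e ^ i \<le> Mc i * weight B n * e ^ K"
        using e Mc(2)[of i n] by (intro mult_mono) (auto intro: order.trans[OF norm_ge_zero])
      then show ?thesis
        using e by (simp add: norm_mult norm_power mult_ac)
    qed (use vanish Mc(1) e less_imp_le[OF weight_pos] B in simp)
    then have "cmod (\<Sum>i\<le>degree P. coeff P i $ n * complex_of_real e ^ i) \<le> (\<Sum>i\<le>degree P. Mc i * e ^ K * weight B n)"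
      by (intro order.trans[OF norm_sum sum_mono])
    then show ?thesis
      unfolding M_def by (simp add: poly_altdef fps_sum_nth sum_distrib_right)
  qed
  moreover have "M \<ge> 0"
    unfolding M_def using Mc(1) by (simp add: sum_nonneg)
  ultimately show ?thesis
    by blast
qed

lemma truncation_nth_le:
  assumes F0: "\<And>n. cmod (F 0 $ n) \<le> D * weight B n"
    and F: "\<And>k n. cmod (F k $ n) \<le> M k * weight B n" and M: "\<And>k. M k \<ge> 0"
    and D: "D \<ge> 0" and B: "B > 0" and e: "0 \<le> e" "e \<le> 1"
  shows "cmod (poly (truncation F K) (fps_const (complex_of_real e)) $ n) \<le> (D + e * (\<Sum>k<K. M k)) * weight B n"
proof -
  have w: "0 \<le> weight B n"
    using less_imp_le[OF weight_pos[OF B]] .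
  have term_le: "cmod (F k $ n * complex_of_real e ^ k) \<le> ((if k = 0 then D else 0) + e * M k) * weight B n" for k
  proof (cases "k = 0")
    case True
    then show ?thesis
      using F0[of n] e M[of k] w by (simp add: algebra_simps add_increasing2)
  next
    case False
    then have "e ^ k \<le> e"
      using e power_decreasing[of 1 k e] by simp
    then have "cmod (F k $ n) * e ^ k \<le> M k * weight B n * e"
      using F[of k n] e by (intro mult_mono) (auto intro: order.trans[OF norm_ge_zero])
    then show ?thesis
      using False e by (simp add: norm_mult norm_power algebra_simps)
  qed
  have "cmod (poly (truncation F K) (fps_const (complex_of_real e)) $ n)
      \<le> (\<Sum>k<K. ((if k = 0 then D else 0) + e * M k) * weight B n)"
    unfolding poly_truncation_nth by (intro order.trans[OF norm_sum sum_mono] term_le)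
  also have "\<dots> = ((\<Sum>k<K. if k = 0 then D else 0) + e * (\<Sum>k<K. M k)) * weight B n"
    by (simp only: sum_distrib_right[symmetric] sum.distrib sum_distrib_left[symmetric])
  also have "\<dots> = ((if 0 < K then D else 0) + e * (\<Sum>k<K. M k)) * weight B n"
    by simp
  also have "\<dots> \<le> (D + e * (\<Sum>k<K. M k)) * weight B n"
    using D w by (intro mult_right_mono) auto
  finally show ?thesis .
qed

lemma truncation_defect_nth_le:
  fixes F :: "nat \<Rightarrow> complex fps"
  assumes sol: "formal_defect (Abs_fps F) = 0"
    and rad: "\<And>k. ereal (1/8) < fps_conv_radius (F k)" and B: "B \<ge> 32"
  obtains M where "\<And>e n. 0 \<le> e \<Longrightarrow> e \<le> 1 \<Longrightarrow>
    cmod (fps_defect (of_real e) (poly (truncation F K) (fps_const (of_real e))) $ n) \<le> M * e ^ K * weight B n"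
proof -
  define S where "S = truncation F K"
  have "agrees_below K (poly_defect S) (formal_defect (Abs_fps F))"
    by (intro agrees_below_defect) (simp add: agrees_below_def S_def coeff_truncation)
  then have vanish: "\<And>j. j < K \<Longrightarrow> coeff (poly_defect S) j = 0"
    unfolding agrees_below_def sol by simp
  have "coeffs_conv_radius_gt (1/8) (poly_defect S)"
    using rad by (intro coeffs_conv_radius_gt_defect) (simp add: coeffs_conv_radius_gt_def S_def coeff_truncation)
  then have "\<exists>M\<ge>0. \<forall>e n. 0 \<le> e \<longrightarrow> e \<le> 1 \<longrightarrow>
      cmod (poly (poly_defect S) (fps_const (of_real e)) $ n) \<le> M * e ^ K * weight B n"
    using B vanish by (intro poly_fps_const_nth_le[of "poly_defect S" K B]) auto
  then show ?thesis
    using that unfolding S_def poly_poly_defect by blast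
qed

lemma truncation_nth_le_small:
  fixes F :: "nat \<Rightarrow> complex fps"
  assumes sol: "formal_defect (Abs_fps F) = 0" and F0: "\<And>k. F k $ 0 = 0"
    and rad: "\<And>k. ereal (1/8) < fps_conv_radius (F k)" and B: "B \<ge> 8192"
  obtains e0 where "e0 > 0" "e0 \<le> 1"
    and "\<And>e n. 0 \<le> e \<Longrightarrow> e \<le> e0 \<Longrightarrow>
      cmod (poly (truncation F K) (fps_const (of_real e)) $ n) \<le> 1 / 16 * weight B n"
proof -
  have "\<forall>k. \<exists>M\<ge>0. \<forall>n. cmod (F k $ n) \<le> M * weight B n"
    using fps_nth_le_weight[OF rad] B by auto
  then obtain M where M: "\<And>k. M k \<ge> 0" "\<And>k n. cmod (F k $ n) \<le> M k * weight B n"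
    by metis
  have "fps_defect (of_real 0) (F 0) = 0"
    using arg_cong[OF sol, of "\<lambda>P. P $ 0"] by (simp add: formal_defect_nth_0)
  then have F0_le: "cmod (F 0 $ n) \<le> 4 / B * weight B n" for n
    by (rule fps_defect_solution_nth_le[OF _ F0[of 0]]) (use B in auto)
  define e0 where "e0 = 1 / (32 * (1 + (\<Sum>k<K. M k)))"
  have M_sum: "0 \<le> (\<Sum>k<K. M k)"
    using M(1) by (simp add: sum_nonneg)
  then have e0: "e0 > 0" "e0 \<le> 1" "e0 * (\<Sum>k<K. M k) \<le> 1 / 32"
    by (auto simp: e0_def field_simps)
  have Bp: "B > 0" "4 / B \<le> 1 / 32"
    using B by auto
  have "cmod (poly (truncation F K) (fps_const (of_real e)) $ n) \<le> 1 / 16 * weight B n"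
    if e: "0 \<le> e" "e \<le> e0" for e n
  proof -
    have "cmod (poly (truncation F K) (fps_const (of_real e)) $ n) \<le> (4 / B + e * (\<Sum>k<K. M k)) * weight B n"
      using F0_le M e e0 Bp by (intro truncation_nth_le) auto
    also have "\<dots> \<le> 1 / 16 * weight B n"
    proof (rule mult_right_mono)
      show "4 / B + e * (\<Sum>k<K. M k) \<le> 1 / 16"
        using Bp(2) e0(3) mult_right_mono[OF e(2) M_sum] by linarith
    qed (use less_imp_le[OF weight_pos[OF Bp(1)]] in simp)
    finally show ?thesis .
  qed
  then show ?thesis
    by (rule that[OF e0(1,2)])
qed

lemma truncation_error_nth_le:
  fixes F :: "nat \<Rightarrow> complex fps"
  assumes sol: "formal_defect (Abs_fps F) = 0" and F0: "\<And>k. F k $ 0 = 0"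
    and rad: "\<And>k. ereal (1/8) < fps_conv_radius (F k)" and B: "B \<ge> 8192"
  obtains e0 M where "e0 > 0"
    and "\<And>e v n. 0 \<le> e \<Longrightarrow> e \<le> e0 \<Longrightarrow> fps_defect (of_real e) v = 0 \<Longrightarrow> v $ 0 = 0 \<Longrightarrow>
           cmod ((v - poly (truncation F K) (fps_const (of_real e))) $ n) \<le> M * e ^ K * weight B n"
proof -
  obtain M where M: "\<And>e n. 0 \<le> e \<Longrightarrow> e \<le> 1 \<Longrightarrow>
      cmod (fps_defect (of_real e) (poly (truncation F K) (fps_const (of_real e))) $ n) \<le> M * e ^ K * weight B n"
    using truncation_defect_nth_le[OF sol rad, of B K] B by auto
  obtain e0 where e0: "e0 > 0" "e0 \<le> 1" and small: "\<And>e n. 0 \<le> e \<Longrightarrow> e \<le> e0 \<Longrightarrow>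
      cmod (poly (truncation F K) (fps_const (of_real e)) $ n) \<le> 1 / 16 * weight B n"
    by (rule truncation_nth_le_small[OF sol F0 rad B, where K = K]) blast
  have "cmod ((v - poly (truncation F K) (fps_const (of_real e))) $ n) \<le> 2 * M * e ^ K * weight B n"
    if e: "0 \<le> e" "e \<le> e0" and v: "fps_defect (of_real e) v = 0" "v $ 0 = 0" for e v n
  proof -
    have v_le: "cmod (v $ n) \<le> 1 / 16 * weight B n" for n
    proof -
      have "cmod (v $ n) \<le> 4 / B * weight B n"
        by (rule fps_defect_solution_nth_le[OF v e(1)]) (use B in simp)
      also have "\<dots> \<le> 1 / 16 * weight B n"
        using B less_imp_le[OF weight_pos, of B n] by (intro mult_right_mono) auto
      finally show ?thesis .
    qed
    have "cmod ((v - poly (truncation F K) (fps_const (of_real e))) $ n) \<le> 2 * (M * e ^ K) * weight B n"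
      using e e0 small by (intro fps_defect_stability[OF v(1) refl v(2) _ e(1) B v_le] M)
        (auto simp: poly_truncation_nth F0)
    then show ?thesis
      by (simp add: mult.assoc)
  qed
  then show ?thesis
    by (rule that[OF e0(1)])
qed

section \<open>The asymptotic expansion\<close>

lemma eventually_at_top_inverse_square_le:
  assumes "e0 > 0"
  shows "\<forall>\<^sub>F a in at_top. a > 0 \<and> 1 / a ^ 2 \<le> (e0 :: real)"
  using eventually_ge_at_top[of "max 1 (1 / e0)"]
proof eventually_elim
  case (elim a)
  then have "a > 0" "a \<le> a ^ 2" "1 / a \<le> e0"
    using assms by (auto simp: power2_eq_square field_simps)
  then show ?case
    by (auto intro: order.trans[OF divide_left_mono[of a "a ^ 2" 1]])
qed

lemma norm_U_minus_truncation_le: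
  fixes F :: "nat \<Rightarrow> complex fps"
  assumes B: "B > 0" and z: "cmod z \<le> 1 / (2 * B)" and sums: "\<And>k. (\<lambda>n. F k $ n * z ^ n) sums Az k"
    and close: "\<And>n. cmod ((fps_scale (of_real (a ^ 2)) (fps_U a)
      - poly (truncation F K) (fps_const (of_real (1 / a ^ 2)))) $ n) \<le> D * weight B n"
  shows "cmod (U a (complex_of_real (a ^ 2) * z) - (\<Sum>k<K. Az k / complex_of_real (a ^ (2 * k)))) \<le> 2 * D"
proof -
  define V s where "V = fps_scale (of_real (a ^ 2)) (fps_U a)"
    and "s = poly (truncation F K) (fps_const (of_real (1 / a ^ 2)))"
  have diff: "summable (\<lambda>n. (V - s) $ n * z ^ n)" "cmod (\<Sum>n. (V - s) $ n * z ^ n) \<le> 2 * D"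
    using weighted_fps_series[OF B close z] unfolding V_def s_def by blast+
  have "(\<lambda>n. s $ n * z ^ n) sums (\<Sum>k<K. Az k / complex_of_real (a ^ (2 * k)))"
    unfolding s_def using truncation_sums[where F = F and A = Az and K = K and c = "of_real (1 / a ^ 2)", OF sums]
    by (simp add: power_mult power_one_over divide_inverse power_inverse)
  then have "(\<lambda>n. (V - s) $ n * z ^ n + s $ n * z ^ n) sums
      ((\<Sum>n. (V - s) $ n * z ^ n) + (\<Sum>k<K. Az k / complex_of_real (a ^ (2 * k))))"
    using diff(1) by (intro sums_add summable_sums)
  then have "U a (complex_of_real (a ^ 2) * z)
      = (\<Sum>n. (V - s) $ n * z ^ n) + (\<Sum>k<K. Az k / complex_of_real (a ^ (2 * k)))"
    unfolding U_eq_suminf V_def[symmetric] by (simp add: algebra_simps sums_iff)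
  then show ?thesis
    using diff(2) by simp
qed

lemma U_asymptotic_expansion:
  fixes F :: "nat \<Rightarrow> complex fps"
  assumes sol: "formal_defect (Abs_fps F) = 0" and F0: "\<And>k. F k $ 0 = 0"
    and rad: "\<And>k. ereal (1/8) < fps_conv_radius (F k)" and B: "B \<ge> 8192"
    and z: "cmod z \<le> 1 / (2 * B)" and sums: "\<And>k. (\<lambda>n. F k $ n * z ^ n) sums Az k"
  shows "\<exists>C. \<forall>\<^sub>F a in at_top.
    cmod (U a (complex_of_real (a ^ 2) * z) - (\<Sum>k<K. Az k / complex_of_real (a ^ (2 * k)))) \<le> C / a ^ (2 * K)"
proof -
  obtain e0 M where e0: "e0 > 0" and error: "\<And>e v n. 0 \<le> e \<Longrightarrow> e \<le> e0 \<Longrightarrow> fps_defect (of_real e) v = 0 \<Longrightarrow>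
      v $ 0 = 0 \<Longrightarrow> cmod ((v - poly (truncation F K) (fps_const (of_real e))) $ n) \<le> M * e ^ K * weight B n"
    by (rule truncation_error_nth_le[OF sol F0 rad B, where K = K]) blast
  have "\<forall>\<^sub>F a in at_top.
    cmod (U a (complex_of_real (a ^ 2) * z) - (\<Sum>k<K. Az k / complex_of_real (a ^ (2 * k)))) \<le> 2 * M / a ^ (2 * K)"
    using eventually_at_top_inverse_square_le[OF e0]
  proof eventually_elim
    case (elim a)
    have "fps_defect (of_real (1 / a ^ 2)) (fps_scale (of_real (a ^ 2)) (fps_U a)) = 0"
      "fps_scale (of_real (a ^ 2)) (fps_U a) $ 0 = 0"
      using fps_defect_fps_U_scaled[of a] elim by simp_all
    then have "cmod ((fps_scale (of_real (a ^ 2)) (fps_U a)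
        - poly (truncation F K) (fps_const (of_real (1 / a ^ 2)))) $ n) \<le> M * (1 / a ^ 2) ^ K * weight B n" for n
      using elim by (intro error) auto
    moreover have "M * (1 / a ^ 2) ^ K = M / a ^ (2 * K)"
      by (simp add: power_mult power_one_over)
    ultimately show ?case
      using B z sums norm_U_minus_truncation_le[of B z F Az a K "M / a ^ (2 * K)"] by simp
  qed
  then show ?thesis
    by (rule exI)
qed

theorem proposition8:
  fixes A :: "nat \<Rightarrow> complex \<Rightarrow> complex"
  assumes "A_seq A"
  shows "\<exists>r>0. \<forall>z. cmod z < r \<longrightarrow>
           (\<forall>\<^sub>F a in at_top. summable (\<lambda>n. complex_of_real (uc a n) * (complex_of_real (a^2) * z) ^ n)) \<and>
           (\<forall>K::nat. \<exists>C. \<forall>\<^sub>F a in at_top.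
              cmod (U a (complex_of_real (a^2) * z) - (\<Sum>k<K. A k z / complex_of_real (a ^ (2*k))))
                \<le> C / a ^ (2*K))"
proof -
  define F where "F k = fps_expansion (A k) 0" for k
  define B :: real where "B = 8192"
  have F: "formal_defect (Abs_fps F) = 0" "\<And>k. F k $ 0 = 0" "\<And>k. ereal (1/8) < fps_conv_radius (F k)"
    using A_seq_formal_solution[OF assms] A_seq_fps_expansion(3)[OF assms]
      order.strict_trans2[OF _ A_seq_fps_expansion(1)[OF assms], of "ereal (1/8)"]
    unfolding F_def by simp_all
  show ?thesis
  proof (rule exI[of _ "1 / (2 * B)"], intro conjI allI impI)
    fix z :: complex
    assume "cmod z < 1 / (2 * B)"
    then have z: "cmod z \<le> 1 / (2 * B)" and z_small: "cmod z < 4/27"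
      by (auto simp: B_def)
    have sums: "(\<lambda>n. F k $ n * z ^ n) sums A k z" for k
      unfolding F_def by (rule A_seq_fps_expansion(2)[OF assms z_small])
    show "\<forall>\<^sub>F a in at_top. summable (\<lambda>n. complex_of_real (uc a n) * (complex_of_real (a ^ 2) * z) ^ n)"
      using eventually_gt_at_top[of 0] by eventually_elim (intro U_summable[OF _ _ z]; simp add: B_def)
    fix K
    show "\<exists>C. \<forall>\<^sub>F a in at_top. cmod (U a (complex_of_real (a ^ 2) * z)
        - (\<Sum>k<K. A k z / complex_of_real (a ^ (2 * k)))) \<le> C / a ^ (2 * K)"
      using F z sums by (intro U_asymptotic_expansion[of F B]) (auto simp: B_def)
  qed (simp add: B_def)
qed

end
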